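(* Let $\gamma_2>0$. For every time step $t\ge1$, the first difference $\Delta L_3(t):=L_3(t+1)-L_3(t)$ of $$L_3(t)=\frac{1}{l_c\gamma_2}\operatorname{tr}\!\left[\big(\tilde w_c^{(1)}(t)\big)^T\tilde w_c^{(1)}(t)\right]$$ satisfies $$\Delta L_3(t)\le\frac1{\gamma_2}\Big(\alpha^2 l_c\, e_c(t)^2\,\|a(t)\|^2\|y(t)\|^2+\alpha\big(a(t)^T\tilde w_c^{(1)}(t)y(t)\big)^2+\alpha\, e_c(t)^2\Big),$$ where $e_c(t)=\alpha\hat w_c^{(2)}(t)\phi_c(t)+r(t)-\hat w_c^{(2)}(t-1)\phi_c(t-1)$.
   Context: Setting (action-dependent heuristic dynamic programming with two one-hidden-layer networks). Fix integers $m,n,N_a,N_c\ge1$, a discount factor $\alpha\in(0,1]$ and learning rates $l_c,l_a>0$. Let $\psi(s)=\frac{1-e^{-s}}{1+e^{-s}}$, applied componentwise to vectors (note $\psi'(s)=\tfrac12(1-\psi(s)^2)$). At each integer time $t$ there are a state $x(t)\in\mathbb R^m$ and a scalar reward $r(t)$. Action network: weights $\hat w_a^{(1)}(t)\in\mathbb R^{N_a\times m}$, $\hat w_a^{(2)}(t)\in\mathbb R^{n\times N_a}$; hidden output $\phi_a(t)=\psi(\hat w_a^{(1)}(t)x(t))\in\mathbb R^{N_a}$; control $u(t)=\hat w_a^{(2)}(t)\phi_a(t)\in\mathbb R^n$. Critic network: weights $\hat w_c^{(1)}(t)\in\mathbb R^{N_c\times(m+n)}$, $\hat w_c^{(2)}(t)\in\mathbb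 R^{1\times N_c}$ (a row vector); input $y(t)=(x(t)^T,u(t)^T)^T\in\mathbb R^{m+n}$; hidden output $\phi_c(t)=\psi(\hat w_c^{(1)}(t)y(t))\in\mathbb R^{N_c}$; output $\hat J(t)=\hat w_c^{(2)}(t)\phi_c(t)$. Critic error $e_c(t)=\alpha\hat J(t)+r(t)-\hat J(t-1)$. Auxiliary quantities: $C(t)\in\mathbb R^{N_c\times n}$ with $C_{ij}(t)=\tfrac12(1-\phi_{c_i}(t)^2)\,(\hat w_c^{(1)}(t))_{i,m+j}$; $a(t)\in\mathbb R^{N_c}$ with $a_i(t)=\tfrac12(1-\phi_{c_i}(t)^2)(\hat w_c^{(2)}(t))_i$; $D(t)\in\mathbb R^{N_a\times n}$ with $D_{ij}(t)=\tfrac12(1-\phi_{a_i}(t)^2)(\hat w_a^{(2)}(t))_{ji}$. The weights are updated by gradient descent: $\hat w_c^{(2)}(t+1)=\hat w_c^{(2)}(t)-l_c\alpha e_c(t)\phi_c(t)^T$, $\hat w_c^{(1)}(t+1)=\hat w_c^{(1)}(t)-l_c\alpha e_c(t)\,a(t)y(t)^T$, $\hat w_a^{(2)}(t+1)=\hat w_a^{(2)}(t)-l_a\hat J(t)\,(\hat w_c^{(2)}(t)C(t))^T\phi_a(t)^T$, $\hat w_a^{(1)}(t+1)=\hat w_a^{(1)}(t)-l_a\hat J(t)\,(\hat w_c^{(2)}(t)C(t)D(t)^T)^T x(t)^T$. Fixed (time-independent) "optimal" weights $w_c^{*(1)},w_c^{*(2)},w_a^{*(1)},w_a^{*(2)}$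 of the same shapes are given, and the estimation errors are $\tilde w_\bullet(t)=\hat w_\bullet(t)-w_\bullet^{*}$. Assumption 1: $\|w_a^*\|\le w_a^{\max}$ and $\|w_c^*\|\le w_c^{\max}$. Norms are Euclidean for vectors and Frobenius for matrices. *)

theory Defs
  imports "HOL-Analysis.Analysis"
begin

definition psi :: "real \<Rightarrow> real" where
  "psi s = (1 - exp (- s)) / (1 + exp (- s))"

definition psiv :: "real ^ 'k \<Rightarrow> real ^ 'k" where
  "psiv v = (\<chi> i. psi (v $ i))"

definition outer :: "real ^ 'r \<Rightarrow> real ^ 'c \<Rightarrow> real ^ 'c ^ 'r" where
  "outer p q = (\<chi> i j. p $ i * q $ j)"

text \<open>Stacked vector (x^T, u^T)^T, indexed by the disjoint sum of index types.\<close>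
definition stack :: "real ^ 'm \<Rightarrow> real ^ 'n \<Rightarrow> real ^ ('m + 'n)" where
  "stack x u = (\<chi> i. case i of Inl j \<Rightarrow> x $ j | Inr j \<Rightarrow> u $ j)"

text \<open>Quantities of the ADHDP scheme, given the weight trajectories.
  Matrices N x M are real^M^N (rows indexed by the first index);
  the row vector \<open>w_c^{(2)}\<close> is represented as real^Nc.\<close>

definition phi_a :: "(nat \<Rightarrow> real ^ 'm ^ 'na) \<Rightarrow> (nat \<Rightarrow> real ^ 'm) \<Rightarrow> nat \<Rightarrow> real ^ 'na" where
  "phi_a Wa1 x t = psiv (Wa1 t *v x t)"

definition ctrl :: "(nat \<Rightarrow> real ^ 'm ^ 'na) \<Rightarrow> (nat \<Rightarrow> real ^ 'na ^ 'n) \<Rightarrow> (nat \<Rightarrow> real ^ 'm) \<Rightarrow> nat \<Rightarrow> real ^ 'n" where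
  "ctrl Wa1 Wa2 x t = Wa2 t *v phi_a Wa1 x t"

definition yv :: "(nat \<Rightarrow> real ^ 'm ^ 'na) \<Rightarrow> (nat \<Rightarrow> real ^ 'na ^ 'n) \<Rightarrow> (nat \<Rightarrow> real ^ 'm) \<Rightarrow> nat \<Rightarrow> real ^ ('m + 'n)" where
  "yv Wa1 Wa2 x t = stack (x t) (ctrl Wa1 Wa2 x t)"

definition phi_c :: "(nat \<Rightarrow> real ^ ('m + 'n) ^ 'nc) \<Rightarrow> (nat \<Rightarrow> real ^ 'm ^ 'na) \<Rightarrow> (nat \<Rightarrow> real ^ 'na ^ 'n) \<Rightarrow> (nat \<Rightarrow> real ^ 'm) \<Rightarrow> nat \<Rightarrow> real ^ 'nc" where
  "phi_c Wc1 Wa1 Wa2 x t = psiv (Wc1 t *v yv Wa1 Wa2 x t)"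

definition Jhat :: "(nat \<Rightarrow> real ^ ('m + 'n) ^ 'nc) \<Rightarrow> (nat \<Rightarrow> real ^ 'nc) \<Rightarrow> (nat \<Rightarrow> real ^ 'm ^ 'na) \<Rightarrow> (nat \<Rightarrow> real ^ 'na ^ 'n) \<Rightarrow> (nat \<Rightarrow> real ^ 'm) \<Rightarrow> nat \<Rightarrow> real" where
  "Jhat Wc1 Wc2 Wa1 Wa2 x t = Wc2 t \<bullet> phi_c Wc1 Wa1 Wa2 x t"

text \<open>Critic error; only meaningful for t \<ge> 1 (uses time t-1).\<close>
definition ec :: "real \<Rightarrow> (nat \<Rightarrow> real) \<Rightarrow> (nat \<Rightarrow> real ^ ('m + 'n) ^ 'nc) \<Rightarrow> (nat \<Rightarrow> real ^ 'nc) \<Rightarrow> (nat \<Rightarrow> real ^ 'm ^ 'na) \<Rightarrow> (nat \<Rightarrow> real ^ 'na ^ 'n) \<Rightarrow> (nat \<Rightarrow> real ^ 'm) \<Rightarrow> nat \<Rightarrow> real" where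
  "ec \<alpha> r Wc1 Wc2 Wa1 Wa2 x t =
     \<alpha> * Jhat Wc1 Wc2 Wa1 Wa2 x t + r t - Jhat Wc1 Wc2 Wa1 Wa2 x (t - 1)"

definition avec :: "(nat \<Rightarrow> real ^ ('m + 'n) ^ 'nc) \<Rightarrow> (nat \<Rightarrow> real ^ 'nc) \<Rightarrow> (nat \<Rightarrow> real ^ 'm ^ 'na) \<Rightarrow> (nat \<Rightarrow> real ^ 'na ^ 'n) \<Rightarrow> (nat \<Rightarrow> real ^ 'm) \<Rightarrow> nat \<Rightarrow> real ^ 'nc" where
  "avec Wc1 Wc2 Wa1 Wa2 x t =
     (\<chi> i. (1/2) * (1 - (phi_c Wc1 Wa1 Wa2 x t $ i)^2) * (Wc2 t $ i))"

definition Cmat :: "(nat \<Rightarrow> real ^ ('m + 'n) ^ 'nc) \<Rightarrow> (nat \<Rightarrow> real ^ 'm ^ 'na) \<Rightarrow> (nat \<Rightarrow> real ^ 'na ^ 'n) \<Rightarrow> (nat \<Rightarrow> real ^ 'm) \<Rightarrow> nat \<Rightarrow> real ^ 'n ^ 'nc" where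
  "Cmat Wc1 Wa1 Wa2 x t =
     (\<chi> i j. (1/2) * (1 - (phi_c Wc1 Wa1 Wa2 x t $ i)^2) * (Wc1 t $ i $ Inr j))"

definition Dmat :: "(nat \<Rightarrow> real ^ 'm ^ 'na) \<Rightarrow> (nat \<Rightarrow> real ^ 'na ^ 'n) \<Rightarrow> (nat \<Rightarrow> real ^ 'm) \<Rightarrow> nat \<Rightarrow> real ^ 'n ^ 'na" where
  "Dmat Wa1 Wa2 x t =
     (\<chi> i j. (1/2) * (1 - (phi_a Wa1 x t $ i)^2) * (Wa2 t $ j $ i))"

definition adhdp_updates ::
  "real \<Rightarrow> real \<Rightarrow> real \<Rightarrow> (nat \<Rightarrow> real) \<Rightarrow> (nat \<Rightarrow> real ^ 'm)
   \<Rightarrow> (nat \<Rightarrow> real ^ ('m + 'n) ^ 'nc) \<Rightarrow> (nat \<Rightarrow> real ^ 'nc)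
   \<Rightarrow> (nat \<Rightarrow> real ^ 'm ^ 'na) \<Rightarrow> (nat \<Rightarrow> real ^ 'na ^ 'n) \<Rightarrow> bool" where
  "adhdp_updates \<alpha> lc la r x Wc1 Wc2 Wa1 Wa2 \<longleftrightarrow>
    (\<forall>t\<ge>1.
      (let e = ec \<alpha> r Wc1 Wc2 Wa1 Wa2 x t;
           J = Jhat Wc1 Wc2 Wa1 Wa2 x t;
           g = vector_matrix_mult (Wc2 t) (Cmat Wc1 Wa1 Wa2 x t)
       in Wc2 (t+1) = Wc2 t - (lc * \<alpha> * e) *\<^sub>R phi_c Wc1 Wa1 Wa2 x t
        \<and> Wc1 (t+1) = Wc1 t - (lc * \<alpha> * e) *\<^sub>R outer (avec Wc1 Wc2 Wa1 Wa2 x t) (yv Wa1 Wa2 x t)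
        \<and> Wa2 (t+1) = Wa2 t - (la * J) *\<^sub>R outer g (phi_a Wa1 x t)
        \<and> Wa1 (t+1) = Wa1 t - (la * J) *\<^sub>R outer (Dmat Wa1 Wa2 x t *v g) (x t)))"

end

theory Submission
  imports Defs
begin

text \<open>Identify \<open>tr(W\<^sup>T W)\<close> with the squared Frobenius norm, which for \<open>real^'n^'m\<close> is
  the ordinary \<open>norm\<close>. The critic update subtracts a rank-one matrix \<open>c a y\<^sup>T\<close> with
  \<open>c = l\<^sub>c \<alpha> e\<^sub>c\<close>, so expanding the square gives
  \<open>\<Delta>L\<^sub>3 = (c\<^sup>2 \<parallel>a\<parallel>\<^sup>2 \<parallel>y\<parallel>\<^sup>2 - 2 c a\<^sup>T W y) / (l\<^sub>c \<gamma>\<^sub>2)\<close>; the cross term is then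
  bounded by \<open>-2 e z \<le> z\<^sup>2 + e\<^sup>2\<close>.\<close>

lemma norm_sq_matrix: "(norm (M :: real^'n^'m))^2 = (\<Sum>i\<in>UNIV. \<Sum>j\<in>UNIV. (M$i$j)^2)"
  unfolding power2_norm_eq_inner inner_vec_def by (simp add: power2_eq_square)

lemma trace_transpose_mult_self: "trace (transpose M ** M) = (norm (M :: real^'n^'m))^2"
proof -
  have "trace (transpose M ** M) = (\<Sum>j\<in>UNIV. \<Sum>i\<in>UNIV. M$i$j * M$i$j)"
    by (simp add: trace_def transpose_def matrix_matrix_mult_def)
  also have "\<dots> = (\<Sum>i\<in>UNIV. \<Sum>j\<in>UNIV. (M$i$j)^2)"
    by (subst sum.swap) (simp add: power2_eq_square)
  finally show ?thesis
    by (simp only: norm_sq_matrix)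
qed

lemma inner_outer: "M \<bullet> outer a y = a \<bullet> (M *v y)"
  by (simp add: inner_vec_def outer_def matrix_vector_mult_def sum_distrib_left mult_ac)

lemma norm_outer: "norm (outer a y) = norm a * norm y"
proof -
  have "(norm (outer a y))^2 = (\<Sum>i\<in>UNIV. \<Sum>j\<in>UNIV. (a$i)^2 * (y$j)^2)"
    by (simp add: norm_sq_matrix outer_def power_mult_distrib)
  also have "\<dots> = (norm a * norm y)^2"
    unfolding power_mult_distrib power2_norm_eq_inner inner_vec_def
    by (simp add: sum_product power2_eq_square)
  finally show ?thesis
    by (simp add: power2_eq_iff_nonneg)
qed

lemma norm_diff_scaleR_outer_sq:
  "(norm (M - c *\<^sub>R outer a y))^2
     = (norm M)^2 - 2 * c * (a \<bullet> (M *v y)) + c^2 * (norm a)^2 * (norm y)^2"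
proof -
  have "(norm (M - c *\<^sub>R outer a y))^2
      = (norm M)^2 - 2 * (M \<bullet> (c *\<^sub>R outer a y)) + (norm (c *\<^sub>R outer a y))^2"
    using dot_norm_neg[of M "c *\<^sub>R outer a y"] by simp
  then show ?thesis
    by (simp add: inner_outer norm_outer power_mult_distrib)
qed

lemma neg_two_mult_le_sum_squares: "- (2 * e * z) \<le> z\<^sup>2 + (e::real)\<^sup>2"
  using zero_le_power2[of "z + e"] unfolding power2_sum by (simp add: mult_ac)

theorem lemma3:
  fixes \<alpha> lc la \<gamma>2 :: real
    and r :: "nat \<Rightarrow> real" and x :: "nat \<Rightarrow> real ^ ('m::finite)"
    and Wc1 :: "nat \<Rightarrow> real ^ ('m + ('n::finite)) ^ ('nc::finite)" and Wc2 :: "nat \<Rightarrow> real ^ 'nc"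
    and Wa1 :: "nat \<Rightarrow> real ^ 'm ^ ('na::finite)" and Wa2 :: "nat \<Rightarrow> real ^ 'na ^ 'n"
    and Wc1s :: "real ^ ('m + 'n) ^ 'nc"
    and L3 :: "nat \<Rightarrow> real"
    and t :: nat
  assumes "0 < \<alpha>" "\<alpha> \<le> 1" "0 < lc" "0 < la" "0 < \<gamma>2"
    and "adhdp_updates \<alpha> lc la r x Wc1 Wc2 Wa1 Wa2"
    and "\<And>s. L3 s = 1 / (lc * \<gamma>2) * trace (transpose (Wc1 s - Wc1s) ** (Wc1 s - Wc1s))"
    and "1 \<le> t"
  shows "L3 (t + 1) - L3 t \<le>
    1 / \<gamma>2 * (\<alpha>^2 * lc * (ec \<alpha> r Wc1 Wc2 Wa1 Wa2 x t)^2
                 * (norm (avec Wc1 Wc2 Wa1 Wa2 x t))^2 * (norm (yv Wa1 Wa2 x t))^2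
             + \<alpha> * (avec Wc1 Wc2 Wa1 Wa2 x t \<bullet> ((Wc1 t - Wc1s) *v yv Wa1 Wa2 x t))^2
             + \<alpha> * (ec \<alpha> r Wc1 Wc2 Wa1 Wa2 x t)^2)"
proof -
  define e where "e = ec \<alpha> r Wc1 Wc2 Wa1 Wa2 x t"
  define a where "a = avec Wc1 Wc2 Wa1 Wa2 x t"
  define y where "y = yv Wa1 Wa2 x t"
  define W where "W = Wc1 t - Wc1s"
  define z where "z = a \<bullet> (W *v y)"
  define Q where "Q = \<alpha>\<^sup>2 * lc * e\<^sup>2 * (norm a)\<^sup>2 * (norm y)\<^sup>2"
  have "Wc1 (t + 1) = Wc1 t - (lc * \<alpha> * e) *\<^sub>R outer a y"
    using assms(6,8) by (simp add: adhdp_updates_def Let_def e_def a_def y_def)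
  then have "Wc1 (t + 1) - Wc1s = W - (lc * \<alpha> * e) *\<^sub>R outer a y"
    by (simp add: W_def)
  then have "L3 (t + 1) - L3 t
      = 1 / (lc * \<gamma>2) * ((lc * \<alpha> * e)\<^sup>2 * (norm a)\<^sup>2 * (norm y)\<^sup>2 - 2 * (lc * \<alpha> * e) * z)"
    by (simp add: assms(7) W_def[symmetric] trace_transpose_mult_self
        norm_diff_scaleR_outer_sq z_def diff_divide_distrib add_divide_distrib)
  also have "\<dots> = 1 / \<gamma>2 * (Q + \<alpha> * - (2 * e * z))"
    using assms(3,5) by (simp add: Q_def field_simps power2_eq_square)
  also have "\<dots> \<le> 1 / \<gamma>2 * (Q + \<alpha> * (z\<^sup>2 + e\<^sup>2))"
    using assms(1,5) neg_two_mult_le_sum_squares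
    by (intro mult_left_mono add_left_mono) auto
  finally show ?thesis
    by (simp add: Q_def e_def a_def y_def z_def W_def distrib_left)
qed

end
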